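(* Let $X^*\subset\mathbb{R}^n$ be a finite set of points and let $X\subset\mathbb{R}^n$ be obtained by perturbing $X^*$, so that each $\boldsymbol x\in X$ has a corresponding unperturbed point $\boldsymbol x^*\in X^*$ (with $g(X)$ and $g(X^* )$ listing values in corresponding order). Let $g\in\mathbb{R}[x_1,\ldots,x_n]$ be gradient-normalized with respect to $X$, i.e. $\|\mathfrak n_{\mathrm g}(g;X)\|=1$. Let $\delta=\max_{\boldsymbol x\in X}\|\boldsymbol x^*-\boldsymbol x\|$. Then $\|g(X)-g(X^* )\|\le\delta+o(\delta)$, where $o(\cdot)$ is Landau's little-o (as $\delta\to0$).
   Context: For a finite point set $Y=\{\boldsymbol y_1,\ldots,\boldsymbol y_N\}$ and a polynomial $h$, $h(Y)=(h(\boldsymbol y_1),\ldots,h(\boldsymbol y_N))^\top$. $\mathfrak n_{\mathrm g}(g;X)=\mathrm{vec}(\nabla g(X))\in\mathbb{R}^{|X|n}$, where $\nabla g(X)$ is the $|X|\times n$ matrix whose rows are the gradients of $g$ at the points of $X$; thus $\|\mathfrak n_{\mathrm g}(g;X)\|^2=\sum_{\boldsymbol x\in X}\|\nabla g(\boldsymbol x)\|^2$. Norms are Euclidean. *)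

theory Defs
  imports "HOL-Analysis.Analysis" "HOL-Library.Landau_Symbols"
begin

definition poly_fun :: "(real ^ 'n \<Rightarrow> real) \<Rightarrow> bool" where
  "poly_fun g \<longleftrightarrow> (\<exists>S :: ('n \<Rightarrow> nat) set. \<exists>c :: ('n \<Rightarrow> nat) \<Rightarrow> real.
      finite S \<and> (\<forall>x. g x = (\<Sum>\<alpha>\<in>S. c \<alpha> * (\<Prod>i\<in>UNIV. (x $ i) ^ (\<alpha> i)))))"

definition grad :: "(real ^ 'n \<Rightarrow> real) \<Rightarrow> real ^ 'n \<Rightarrow> real ^ 'n" where
  "grad g x = (THE G. (g has_derivative (\<lambda>h. G \<bullet> h)) (at x))"

end

(* A polynomial g is differentiable and continuous everywhere, so at each x_i
   g (x_i + h) = g x_i + grad g x_i \<bullet> h + R_i h, where the supremum of |R_i| over the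
   ball of radius d is finite and o(d). Cauchy-Schwarz bounds each |g x_i - g xs_i| by
   |grad g x_i| \<delta> + \<rho>_i \<delta>, and the triangle inequality for the l2 norm together with
   the gradient normalisation turns this into \<delta> + \<Sum>_i \<rho>_i \<delta>. *)
theory Submission
  imports Defs
begin

lemma has_derivative_grad:
  fixes f :: "real ^ 'n \<Rightarrow> real"
  assumes "f differentiable (at y)"
  shows "(f has_derivative (\<lambda>h. grad f y \<bullet> h)) (at y)"
proof -
  obtain f' where f': "(f has_derivative f') (at y)"
    using assms unfolding differentiable_def by blast
  define G where "G = adjoint f' 1"
  have f'_eq: "f' = (\<lambda>h. G \<bullet> h)"
    using has_derivative_linear[OF f'] unfolding G_def
    by (metis adjoint_clauses(2) real_inner_1_left)
  have "grad f y = G"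
    unfolding grad_def
  proof (rule the_equality)
    show "(f has_derivative (\<lambda>h. G \<bullet> h)) (at y)"
      using f' f'_eq by simp
  next
    fix G' assume "(f has_derivative (\<lambda>h. G' \<bullet> h)) (at y)"
    then have "(\<lambda>h. G' \<bullet> h) = (\<lambda>h. G \<bullet> h)"
      using f' f'_eq has_derivative_unique by blast
    then show "G' = G"
      by (metis vector_eq_rdot)
  qed
  then show ?thesis
    using f' f'_eq by simp
qed

lemma poly_fun_differentiable:
  fixes g :: "real ^ 'n \<Rightarrow> real"
  assumes "poly_fun g"
  shows "g differentiable (at y)"
proof -
  obtain S and c :: "('n \<Rightarrow> nat) \<Rightarrow> real"
    where g_eq: "g = (\<lambda>x. \<Sum>\<alpha>\<in>S. c \<alpha> * (\<Prod>i\<in>UNIV. (x $ i) ^ (\<alpha> i)))"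
    using assms unfolding poly_fun_def by blast
  show ?thesis
    unfolding g_eq differentiable_def
    by (rule exI, (rule derivative_intros has_derivative_ident
          bounded_linear.has_derivative[OF bounded_linear_vec_nth])+)
qed

lemma poly_fun_continuous_on:
  fixes g :: "real ^ 'n \<Rightarrow> real"
  assumes "poly_fun g"
  shows "continuous_on S g"
  using poly_fun_differentiable[OF assms]
  by (meson continuous_at_imp_continuous_on differentiable_imp_continuous_within)

lemma has_derivative_remainder_smallo:
  fixes f :: "'a::euclidean_space \<Rightarrow> 'b::real_normed_vector"
  assumes cont: "continuous_on UNIV f" and deriv: "(f has_derivative f') (at a)"
  shows "\<exists>\<rho>. \<rho> \<in> o[at_right 0](\<lambda>d. d) \<and>
           (\<forall>h d. norm h \<le> d \<longrightarrow> norm (f (a + h) - f a - f' h) \<le> \<rho> d)"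
proof -
  define R where "R h = norm (f (a + h) - f a - f' h)" for h
  define \<rho> where "\<rho> d = (SUP h\<in>cball 0 d. R h)" for d
  have lin: "bounded_linear f'"
    using deriv by (rule has_derivative_bounded_linear)
  have "continuous_on UNIV (\<lambda>h. f (a + h))"
    by (rule continuous_on_compose2[OF cont]) (auto intro: continuous_intros)
  then have "continuous_on UNIV R"
    unfolding R_def using linear_continuous_on[OF lin]
    by (intro continuous_on_norm continuous_on_diff continuous_on_const)
  then have bdd: "bdd_above (R ` cball 0 d)" for d
    by (meson bounded_imp_bdd_above compact_imp_bounded compact_continuous_image
        continuous_on_subset subset_UNIV compact_cball)
  have R_le: "R h \<le> \<rho> d" if "norm h \<le> d" for h d
    unfolding \<rho>_def using that by (intro cSUP_upper bdd) auto
  have "\<rho> \<in> o[at_right 0](\<lambda>d. d)"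
  proof (rule landau_o.smallI)
    fix c :: real assume "c > 0"
    then obtain \<eta> where "\<eta> > 0" and \<eta>:
      "\<And>y. norm (y - a) < \<eta> \<Longrightarrow> norm (f y - f a - f' (y - a)) \<le> c * norm (y - a)"
      using deriv unfolding has_derivative_at_alt by blast
    show "eventually (\<lambda>d. norm (\<rho> d) \<le> c * norm d) (at_right 0)"
      using eventually_at_right_real[OF \<open>\<eta> > 0\<close>]
    proof (rule eventually_mono)
      fix d assume d: "d \<in> {0<..<\<eta>}"
      have "\<rho> d \<le> c * d"
        unfolding \<rho>_def
      proof (rule cSUP_least)
        show "cball 0 d \<noteq> {}"
          using d by auto
      next
        fix h :: 'a assume "h \<in> cball 0 d"
        then have "norm h \<le> d" by simp
        then have "R h \<le> c * norm h"
          using \<eta>[of "a + h"] d by (simp add: R_def)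
        also have "\<dots> \<le> c * d"
          using \<open>norm h \<le> d\<close> \<open>c > 0\<close> by simp
        finally show "R h \<le> c * d" .
      qed
      moreover have "0 \<le> \<rho> d"
        using R_le[of 0 d] d linear_0[OF bounded_linear.linear[OF lin]] by (simp add: R_def)
      ultimately show "norm (\<rho> d) \<le> c * norm d"
        using d by simp
    qed
  qed
  then show ?thesis
    using R_le unfolding R_def by blast
qed

lemma L2_set_le_linear_plus_sum:
  assumes "\<And>i. i \<in> A \<Longrightarrow> \<bar>u i\<bar> \<le> a i * t + e i" and "0 \<le> t"
  shows "L2_set u A \<le> L2_set a A * t + (\<Sum>i\<in>A. \<bar>e i\<bar>)"
proof -
  have "L2_set u A = L2_set (\<lambda>i. \<bar>u i\<bar>) A"
    by (simp add: L2_set_def)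
  also have "\<dots> \<le> L2_set (\<lambda>i. a i * t + e i) A"
    using assms(1) by (intro L2_set_mono) auto
  also have "\<dots> \<le> L2_set (\<lambda>i. a i * t) A + L2_set e A"
    by (rule L2_set_triangle_ineq)
  also have "L2_set (\<lambda>i. a i * t) A = L2_set a A * t"
    using assms(2) by (simp add: L2_set_left_distrib)
  also have "L2_set e A \<le> (\<Sum>i\<in>A. \<bar>e i\<bar>)"
    by (rule L2_set_le_sum_abs)
  finally show ?thesis by simp
qed

theorem proposition3:
  fixes g :: "real ^ 'n \<Rightarrow> real"
    and x :: "nat \<Rightarrow> real ^ 'n"
    and N :: nat
  assumes "poly_fun g"
    and "inj_on x {..<N}"
    and "(\<Sum>i<N. (norm (grad g (x i)))\<^sup>2) = 1"
  shows "\<exists>r :: real \<Rightarrow> real. r \<in> o[at_right 0](\<lambda>d. d) \<and>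
           (\<forall>xs :: nat \<Rightarrow> real ^ 'n. inj_on xs {..<N} \<longrightarrow>
              (let \<delta> = Max ((\<lambda>i. norm (xs i - x i)) ` {..<N}) in
                 sqrt (\<Sum>i<N. (g (x i) - g (xs i))\<^sup>2) \<le> \<delta> + r \<delta>))"
proof -
  have deriv: "(g has_derivative (\<lambda>h. grad g (x i) \<bullet> h)) (at (x i))" for i
    by (intro has_derivative_grad poly_fun_differentiable assms(1))
  obtain \<rho> where \<rho>_smallo: "\<And>i. \<rho> i \<in> o[at_right 0](\<lambda>d. d)"
    and \<rho>_bound: "\<And>i h d. norm h \<le> d \<Longrightarrow>
                   \<bar>g (x i + h) - g (x i) - grad g (x i) \<bullet> h\<bar> \<le> \<rho> i d"
    using has_derivative_remainder_smallo[OF poly_fun_continuous_on[OF assms(1)] deriv]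
    by (simp only: real_norm_def) metis
  define r where "r d = (\<Sum>i<N. \<bar>\<rho> i d\<bar>)" for d
  have "r \<in> o[at_right 0](\<lambda>d. d)"
    unfolding r_def by (intro big_sum_in_smallo) (simp add: \<rho>_smallo)
  moreover have "sqrt (\<Sum>i<N. (g (x i) - g (xs i))\<^sup>2) \<le> \<delta> + r \<delta>"
    if \<delta>: "\<delta> = Max ((\<lambda>i. norm (xs i - x i)) ` {..<N})" for xs \<delta>
  proof -
    have dist: "norm (xs i - x i) \<le> \<delta>" if "i < N" for i
      unfolding \<delta> using that by (intro Max_ge) auto
    have "0 < N"
      using assms(3) by (rule contrapos_pp) simp
    then have "0 \<le> \<delta>"
      using dist[of 0] norm_ge_zero order_trans by blast
    have "\<bar>g (x i) - g (xs i)\<bar> \<le> norm (grad g (x i)) * \<delta> + \<rho> i \<delta>" if "i < N" for i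
    proof -
      have "\<bar>g (x i) - g (xs i)\<bar> \<le> \<bar>grad g (x i) \<bullet> (xs i - x i)\<bar> + \<rho> i \<delta>"
        using \<rho>_bound[OF dist[OF that], of i] by simp
      also have "\<dots> \<le> norm (grad g (x i)) * \<delta> + \<rho> i \<delta>"
        using Cauchy_Schwarz_ineq2[of "grad g (x i)" "xs i - x i"] dist[OF that]
          mult_left_mono[of _ \<delta> "norm (grad g (x i))"] by fastforce
      finally show ?thesis .
    qed
    then have "L2_set (\<lambda>i. g (x i) - g (xs i)) {..<N}
                 \<le> L2_set (\<lambda>i. norm (grad g (x i))) {..<N} * \<delta> + r \<delta>"
      unfolding r_def using \<open>0 \<le> \<delta>\<close> by (intro L2_set_le_linear_plus_sum) auto
    moreover have "L2_set (\<lambda>i. norm (grad g (x i))) {..<N} = 1"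
      using assms(3) by (simp add: L2_set_def)
    ultimately show ?thesis
      by (simp add: L2_set_def)
  qed
  ultimately show ?thesis
    by (auto simp: Let_def)
qed

end
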